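(* Let $E,F$ be Banach spaces over $\mathbb{K}$ and $m,n,k\in\mathbb{N}$. If either $k=n=1$, or $kn$ is odd and $\mathbb{K}=\mathbb{R}$, then the map $P\in\mathcal{P}(^mE;F)\mapsto\Delta^n_kP\in\mathcal{P}(^n\mathcal{P}(^kF);\mathcal{P}(^{mkn}E))$ is injective.
   Context: Banach spaces are over $\mathbb{K}=\mathbb{R}$ or $\mathbb{C}$. $\mathcal{P}(^jX;Y)$ is the space of continuous $j$-homogeneous polynomials $X\to Y$, $\mathcal{P}(^jX)=\mathcal{P}(^jX;\mathbb{K})$. For $P\in\mathcal{P}(^mE;F)$, $\Delta^n_kP\colon\mathcal{P}(^kF)\to\mathcal{P}(^{mnk}E)$ is defined by $\Delta^n_kP(q)(x)=q(P(x))^n$. *)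

theory Defs
  imports "HOL-Analysis.Analysis"
begin

text \<open>A real Banach space is a type of class banach with scaleR.
A complex Banach space is a real Banach space together with a complex scalar
multiplication extending scaleR and making the norm complex-absolutely homogeneous.\<close>

definition complex_structure :: "(complex \<Rightarrow> 'a::real_normed_vector \<Rightarrow> 'a) \<Rightarrow> bool" where
  "complex_structure sc \<longleftrightarrow>
     (\<forall>r x. sc (complex_of_real r) x = r *\<^sub>R x) \<and>
     (\<forall>a b x. sc (a * b) x = sc a (sc b x)) \<and>
     (\<forall>a x y. sc a (x + y) = sc a x + sc a y) \<and>
     (\<forall>a b x. sc (a + b) x = sc a x + sc b x) \<and>
     (\<forall>a x. norm (sc a x) = cmod a * norm x)"

text \<open>j-linear maps X^j \<rightarrow> Y over the scalars 'k acting via scX, scY.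
Elements of X^j are represented as functions nat \<Rightarrow> X, only coordinates < j matter.\<close>

definition multilinear_map ::
  "('k \<Rightarrow> 'a \<Rightarrow> 'a) \<Rightarrow> ('k \<Rightarrow> 'b \<Rightarrow> 'b) \<Rightarrow> nat \<Rightarrow> ((nat \<Rightarrow> 'a::ab_group_add) \<Rightarrow> 'b::ab_group_add) \<Rightarrow> bool" where
  "multilinear_map scX scY j A \<longleftrightarrow>
     (\<forall>x y. (\<forall>i<j. x i = y i) \<longrightarrow> A x = A y) \<and>
     (\<forall>i<j. \<forall>x.
        (\<forall>y z. A (x(i := y + z)) = A (x(i := y)) + A (x(i := z))) \<and>
        (\<forall>c y. A (x(i := scX c y)) = scY c (A (x(i := y)))))"

definition hom_poly ::
  "('k \<Rightarrow> 'a \<Rightarrow> 'a) \<Rightarrow> ('k \<Rightarrow> 'b \<Rightarrow> 'b) \<Rightarrow> nat \<Rightarrow> ('a::real_normed_vector \<Rightarrow> 'b::real_normed_vector) \<Rightarrow> bool" where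
  "hom_poly scX scY j P \<longleftrightarrow>
     (\<exists>A. multilinear_map scX scY j A \<and> continuous_on UNIV A \<and> (\<forall>x. P x = A (\<lambda>_. x)))"

definition Delta ::
  "('b \<Rightarrow> 'k) set \<Rightarrow> nat \<Rightarrow> ('a \<Rightarrow> 'b) \<Rightarrow> ('b \<Rightarrow> 'k) \<Rightarrow> ('a \<Rightarrow> 'k::monoid_mult)" where
  "Delta Q n P = (\<lambda>q\<in>Q. \<lambda>x. (q (P x)) ^ n)"

end

theory Submission
  imports Defs
begin

text \<open>If \<phi> is a continuous linear functional on F, then q = \<phi>^k is a k-homogeneous polynomial and
  \<Delta>^n_k P (q) = (\<phi> \<circ> P)^(kn). For odd kn the real kn-th root recovers \<phi>(P x), and by
  Hahn--Banach these functionals separate the points of F, so P is determined by \<Delta>^n_k P.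
  Over \<complex> with k = n = 1 the same argument works with complex-linear functionals, obtained from
  real ones as \<phi>(v) - i \<phi>(i v).\<close>

text \<open>Partial functionals are encoded by their graphs, so that extension is inclusion and a chain
  of graphs is bounded by its union.\<close>

definition norming_graph :: "'b::real_normed_vector \<Rightarrow> ('b \<times> real) set \<Rightarrow> bool" where
  "norming_graph y G \<longleftrightarrow>
     subspace G \<and> single_valued G \<and> (\<forall>(x, a)\<in>G. a \<le> norm x) \<and> (y, norm y) \<in> G"

lemma dominated_extension_constant:
  fixes M :: "('b::real_normed_vector \<times> real) set"
  assumes M: "subspace M" and dom: "\<And>x a. (x, a) \<in> M \<Longrightarrow> a \<le> norm x"
  shows "\<exists>c. (\<forall>(u, a)\<in>M. a - norm (u - z) \<le> c) \<and> (\<forall>(v, b)\<in>M. c \<le> norm (v + z) - b)"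
proof -
  have between: "a - norm (u - z) \<le> norm (v + z) - b" if "(u, a) \<in> M" "(v, b) \<in> M" for u a v b
  proof -
    have "a + b \<le> norm (u + v)" using dom subspace_add[OF M that] by simp
    also have "\<dots> \<le> norm (u - z) + norm (v + z)" using norm_triangle_ineq[of "u - z" "v + z"] by simp
    finally show ?thesis by simp
  qed
  have zero: "(0, 0) \<in> M" using subspace_0[OF M] by (simp add: zero_prod_def)
  define S where "S = {a - norm (u - z) | u a. (u, a) \<in> M}"
  have "S \<noteq> {}" using zero unfolding S_def by blast
  moreover have "bdd_above S" using between[OF _ zero] unfolding S_def bdd_above_def by auto
  ultimately have "a - norm (u - z) \<le> Sup S" "Sup S \<le> norm (v + z) - b"
    if "(u, a) \<in> M" "(v, b) \<in> M" for u a v b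
    using that between unfolding S_def by (auto intro!: cSup_upper cSup_least)
  then show ?thesis by blast
qed

lemma dominated_extension_bound:
  fixes M :: "('b::real_normed_vector \<times> real) set"
  assumes M: "subspace M" and dom: "\<And>x a. (x, a) \<in> M \<Longrightarrow> a \<le> norm x" and xa: "(x, r) \<in> M"
    and below: "\<forall>(u, a)\<in>M. a - norm (u - z) \<le> c" and above: "\<forall>(v, b)\<in>M. c \<le> norm (v + z) - b"
  shows "r + t * c \<le> norm (x + t *\<^sub>R z)"
proof (cases t "0::real" rule: linorder_cases)
  case equal
  then show ?thesis using dom[OF xa] by simp
next
  case greater
  have "(inverse t *\<^sub>R x, inverse t * r) \<in> M" using subspace_mul[OF M xa, of "inverse t"] by simp
  then have "c \<le> norm (inverse t *\<^sub>R x + z) - inverse t * r" using above by blast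
  then have "t * c \<le> t * (norm (inverse t *\<^sub>R x + z) - inverse t * r)"
    using greater by (simp add: mult_left_mono)
  also have "\<dots> = t * norm (inverse t *\<^sub>R x + z) - r"
    using greater by (simp add: right_diff_distrib)
  also have "t * norm (inverse t *\<^sub>R x + z) = norm (t *\<^sub>R (inverse t *\<^sub>R x + z))"
    using greater by simp
  also have "t *\<^sub>R (inverse t *\<^sub>R x + z) = x + t *\<^sub>R z"
    using greater by (simp add: scaleR_add_right)
  finally show ?thesis by simp
next
  case less
  define s where "s = - t"
  have s: "s > 0" using less by (simp add: s_def)
  have "(inverse s *\<^sub>R x, inverse s * r) \<in> M" using subspace_mul[OF M xa, of "inverse s"] by simp
  then have "inverse s * r - norm (inverse s *\<^sub>R x - z) \<le> c" using below by blast
  then have "s * (inverse s * r - norm (inverse s *\<^sub>R x - z)) \<le> s * c"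
    using s by (simp add: mult_left_mono)
  then have "r - s * norm (inverse s *\<^sub>R x - z) \<le> s * c"
    using s by (simp add: right_diff_distrib mult.assoc[symmetric])
  also have "s * norm (inverse s *\<^sub>R x - z) = norm (s *\<^sub>R (inverse s *\<^sub>R x - z))"
    using s by simp
  also have "s *\<^sub>R (inverse s *\<^sub>R x - z) = x + t *\<^sub>R z"
    using s by (simp add: s_def scaleR_diff_right)
  finally show ?thesis by (simp add: s_def)
qed

lemma subspace_sum_line:
  assumes "subspace M"
  shows "subspace {p + t *\<^sub>R v | p t. p \<in> M}"
proof -
  have "{p + t *\<^sub>R v | p t. p \<in> M} = {p + q | p q. p \<in> M \<and> q \<in> span {v}}"
    by (auto simp: span_singleton)
  then show ?thesis using subspace_sums[OF assms subspace_span[of "{v}"]] by simp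
qed

lemma single_valued_extension:
  fixes M :: "('b::real_vector \<times> real) set"
  assumes M: "subspace M" "single_valued M" and z: "z \<notin> fst ` M"
  shows "single_valued {p + t *\<^sub>R (z, c) | p t. p \<in> M}"
proof (rule single_valuedI)
  fix w a b assume "(w, a) \<in> {p + t *\<^sub>R (z, c) | p t. p \<in> M}" "(w, b) \<in> {p + t *\<^sub>R (z, c) | p t. p \<in> M}"
  then obtain p t p' t' where "p \<in> M" "(w, a) = p + t *\<^sub>R (z, c)" "p' \<in> M" "(w, b) = p' + t' *\<^sub>R (z, c)"
    by blast
  moreover obtain x a0 x' b0 where "p = (x, a0)" "p' = (x', b0)" by fastforce
  ultimately have xa: "(x, a0) \<in> M" "w = x + t *\<^sub>R z" "a = a0 + t * c"
    and xb: "(x', b0) \<in> M" "w = x' + t' *\<^sub>R z" "b = b0 + t' * c"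
    by simp_all
  have diff: "(x - x', a0 - b0) \<in> M" using subspace_diff[OF M(1) xa(1) xb(1)] by simp
  have "t = t'"
  proof (rule ccontr)
    assume "t \<noteq> t'"
    then have "z = inverse (t' - t) *\<^sub>R ((t' - t) *\<^sub>R z)" by simp
    also have "(t' - t) *\<^sub>R z = x - x'" using xa(2) xb(2) by (simp add: algebra_simps)
    finally have "z = inverse (t' - t) *\<^sub>R (x - x')" .
    moreover have "(inverse (t' - t) *\<^sub>R (x - x'), inverse (t' - t) * (a0 - b0)) \<in> M"
      using subspace_mul[OF M(1) diff] by simp
    ultimately show False using z by force
  qed
  moreover from this have "x = x'" using xa(2) xb(2) by simp
  ultimately show "a = b" using M(2) xa xb by (auto dest: single_valuedD)
qed

lemma norming_graph_extend:
  assumes G: "norming_graph y M" and z: "z \<notin> fst ` M"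
  shows "\<exists>M'. norming_graph y M' \<and> M \<subset> M'"
proof -
  have M: "subspace M" "single_valued M" and dom: "\<And>x a. (x, a) \<in> M \<Longrightarrow> a \<le> norm x"
    and y: "(y, norm y) \<in> M"
    using G unfolding norming_graph_def by auto
  obtain c where below: "\<forall>(u, a)\<in>M. a - norm (u - z) \<le> c" and above: "\<forall>(v, b)\<in>M. c \<le> norm (v + z) - b"
    using dominated_extension_constant[OF M(1) dom] by blast
  define M' where "M' = {p + t *\<^sub>R (z, c) | p t. p \<in> M}"
  have sub: "subspace M'" unfolding M'_def by (rule subspace_sum_line[OF M(1)])
  have "M \<subseteq> M'"
  proof
    fix p assume "p \<in> M"
    moreover have "p = p + 0 *\<^sub>R (z, c)" by (simp add: zero_prod_def)
    ultimately show "p \<in> M'" unfolding M'_def by blast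
  qed
  moreover have "single_valued M'" unfolding M'_def by (rule single_valued_extension[OF M z])
  moreover have "\<forall>(w, a)\<in>M'. a \<le> norm w"
    using dominated_extension_bound[OF M(1) dom _ below above] unfolding M'_def by auto
  ultimately have "norming_graph y M'" using sub y unfolding norming_graph_def by blast
  moreover have "(z, c) \<in> M'"
  proof -
    have "(z, c) = 0 + 1 *\<^sub>R (z, c)" by simp
    then show ?thesis using subspace_0[OF M(1)] unfolding M'_def by blast
  qed
  moreover have "(z, c) \<notin> M" using z by (metis fst_conv image_eqI)
  ultimately show ?thesis using \<open>M \<subseteq> M'\<close> by blast
qed

lemma norming_graph_Union_chain:
  assumes C: "C \<in> chains {G. norming_graph y G}" and "C \<noteq> {}"
  shows "norming_graph y (\<Union>C)"
proof -
  have G: "\<And>G. G \<in> C \<Longrightarrow> norming_graph y G" using chainsD2[OF C] by blast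
  have common: "\<exists>G\<in>C. p \<in> G \<and> q \<in> G" if "p \<in> \<Union>C" "q \<in> \<Union>C" for p q
    using that chainsD[OF C] by blast
  obtain G0 where "G0 \<in> C" using \<open>C \<noteq> {}\<close> by blast
  show ?thesis
    unfolding norming_graph_def subspace_def single_valued_def
  proof (intro conjI ballI allI impI)
    show "0 \<in> \<Union>C" "(y, norm y) \<in> \<Union>C"
      using G[OF \<open>G0 \<in> C\<close>] \<open>G0 \<in> C\<close> unfolding norming_graph_def by (auto dest: subspace_0)
  next
    fix p q assume "p \<in> \<Union>C" "q \<in> \<Union>C"
    then show "p + q \<in> \<Union>C" using common G unfolding norming_graph_def by (blast dest: subspace_add)
  next
    fix r p assume "p \<in> \<Union>C"
    then show "r *\<^sub>R p \<in> \<Union>C" using G unfolding norming_graph_def by (blast dest: subspace_mul)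
  next
    fix x a b assume "(x, a) \<in> \<Union>C" "(x, b) \<in> \<Union>C"
    then show "a = b" using common G unfolding norming_graph_def by (blast dest: single_valuedD)
  next
    fix p assume "p \<in> \<Union>C"
    then show "case p of (x, a) \<Rightarrow> a \<le> norm x" using G unfolding norming_graph_def by blast
  qed
qed

lemma norming_graph_line:
  assumes "y \<noteq> 0"
  shows "norming_graph y (range (\<lambda>t. t *\<^sub>R (y, norm y)))"
  unfolding norming_graph_def
proof (intro conjI)
  show "subspace (range (\<lambda>t. t *\<^sub>R (y, norm y)))"
    using subspace_span[of "{(y, norm y)}"] by (simp add: span_singleton)
  show "single_valued (range (\<lambda>t. t *\<^sub>R (y, norm y)))"
    using assms by (auto intro!: single_valuedI)
  show "\<forall>(x, a)\<in>range (\<lambda>t. t *\<^sub>R (y, norm y)). a \<le> norm x"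
    by (auto intro: mult_right_mono)
  show "(y, norm y) \<in> range (\<lambda>t. t *\<^sub>R (y, norm y))"
    by (auto intro: range_eqI[of _ _ 1])
qed

lemma maximal_norming_graph:
  assumes "y \<noteq> 0"
  obtains M where "norming_graph y M" and "\<And>M'. norming_graph y M' \<Longrightarrow> M \<subseteq> M' \<Longrightarrow> M' = M"
proof -
  have "\<exists>U\<in>{G. norming_graph y G}. \<forall>X\<in>C. X \<subseteq> U" if "C \<in> chains {G. norming_graph y G}" for C
  proof (cases "C = {}")
    case True
    then show ?thesis using norming_graph_line[OF assms] by blast
  next
    case False
    then show ?thesis using norming_graph_Union_chain[OF that] by blast
  qed
  then obtain M where "norming_graph y M" "\<forall>M'\<in>{G. norming_graph y G}. M \<subseteq> M' \<longrightarrow> M' = M"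
    using Zorn_Lemma2[of "{G. norming_graph y G}"] by auto
  then show ?thesis by (intro that) auto
qed

lemma total_norming_graph_functional:
  assumes G: "norming_graph y M" and total: "\<And>x. x \<in> fst ` M"
  shows "\<exists>f. bounded_linear f \<and> (\<forall>x. \<bar>f x\<bar> \<le> norm x) \<and> f y = norm y"
proof -
  have M: "subspace M" "single_valued M" and dom: "\<And>x a. (x, a) \<in> M \<Longrightarrow> a \<le> norm x"
    and y: "(y, norm y) \<in> M"
    using G unfolding norming_graph_def by auto
  define f where "f x = (THE a. (x, a) \<in> M)" for x
  have "\<exists>!a. (x, a) \<in> M" for x
  proof -
    obtain a where "(x, a) \<in> M" using total[of x] by force
    then show ?thesis using single_valuedD[OF M(2)] by blast
  qed
  then have graph: "(x, f x) \<in> M" for x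
    unfolding f_def by (rule theI')
  have f_eq: "f x = a" if "(x, a) \<in> M" for x a
    using M(2) that graph by (auto dest: single_valuedD)
  have add: "f (u + v) = f u + f v" for u v
    using subspace_add[OF M(1) graph graph] f_eq by simp
  have scale: "f (r *\<^sub>R u) = r * f u" for r u
    using subspace_mul[OF M(1) graph] f_eq by simp
  have bound: "\<bar>f x\<bar> \<le> norm x" for x
  proof -
    have "- f x \<le> norm x" using dom[OF graph, of "- x"] scale[of "- 1" x] by simp
    then show ?thesis using dom[OF graph, of x] by (simp add: abs_le_iff)
  qed
  have "bounded_linear f"
    by (rule bounded_linear_intro[where K = 1]) (use add scale bound in auto)
  then show ?thesis using bound f_eq[OF y] by blast
qed

theorem hahn_banach_norming_functional:
  fixes y :: "'b::real_normed_vector"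
  assumes "y \<noteq> 0"
  shows "\<exists>f. bounded_linear f \<and> (\<forall>x. \<bar>f x\<bar> \<le> norm x) \<and> f y = norm y"
proof -
  obtain M where G: "norming_graph y M" and max: "\<And>M'. norming_graph y M' \<Longrightarrow> M \<subseteq> M' \<Longrightarrow> M' = M"
    using maximal_norming_graph[OF assms] by blast
  have "x \<in> fst ` M" for x
  proof (rule ccontr)
    assume "x \<notin> fst ` M"
    then obtain M' where "norming_graph y M'" "M \<subset> M'" using norming_graph_extend[OF G] by blast
    then show False using max[of M'] by blast
  qed
  then show ?thesis by (rule total_norming_graph_functional[OF G])
qed

lemma bounded_linear_functional_separating:
  fixes y1 y2 :: "'b::real_normed_vector"
  assumes "y1 \<noteq> y2"
  obtains f :: "'b \<Rightarrow> real" where "bounded_linear f" and "f y1 \<noteq> f y2"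
proof -
  obtain f where f: "bounded_linear f" "f (y1 - y2) = norm (y1 - y2)"
    using hahn_banach_norming_functional[of "y1 - y2"] assms by auto
  then have "f y1 - f y2 = norm (y1 - y2)" by (simp add: linear_diff bounded_linear.linear)
  then have "f y1 \<noteq> f y2" using assms by auto
  with f(1) show ?thesis by (rule that)
qed

lemma complex_structureD:
  assumes "complex_structure sc"
  shows complex_structure_of_real: "sc (complex_of_real r) u = r *\<^sub>R u"
    and complex_structure_mult: "sc (a * b) u = sc a (sc b u)"
    and complex_structure_add_right: "sc a (u + v) = sc a u + sc a v"
    and complex_structure_add_left: "sc (a + b) u = sc a u + sc b u"
    and complex_structure_norm: "norm (sc a u) = cmod a * norm u"
  using assms unfolding complex_structure_def by auto

lemma complex_structure_scaleR_commute:
  assumes "complex_structure sc"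
  shows "sc c (r *\<^sub>R u) = r *\<^sub>R sc c u"
  using complex_structureD[OF assms]
  by (metis mult.commute)

lemma complex_structure_bounded_linear:
  assumes "complex_structure sc"
  shows "bounded_linear (sc c)"
  by (rule bounded_linear_intro[where K = "cmod c"])
    (simp_all add: complex_structureD[OF assms] complex_structure_scaleR_commute[OF assms])

lemma complex_structure_Re_Im:
  assumes "complex_structure sc"
  shows "sc c u = Re c *\<^sub>R u + Im c *\<^sub>R sc \<i> u"
proof -
  have "c = complex_of_real (Re c) + complex_of_real (Im c) * \<i>"
    by (simp add: complex_eq_iff)
  then have "sc c u = sc (complex_of_real (Re c) + complex_of_real (Im c) * \<i>) u"
    by simp
  then show ?thesis by (simp only: complex_structureD[OF assms])
qed

lemma complex_structure_i_i:
  assumes "complex_structure sc"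
  shows "sc \<i> (sc \<i> u) = - u"
proof -
  have "sc \<i> (sc \<i> u) = sc (complex_of_real (- 1)) u"
    by (simp add: complex_structureD[OF assms, symmetric])
  also have "\<dots> = - u" using complex_structure_of_real[OF assms, of "- 1" u] by simp
  finally show ?thesis .
qed

lemma complexification:
  fixes f :: "'b::real_normed_vector \<Rightarrow> real"
  assumes sc: "complex_structure sc" and f: "bounded_linear f"
  defines "g \<equiv> \<lambda>v. complex_of_real (f v) - \<i> * complex_of_real (f (sc \<i> v))"
  shows complexification_bounded_linear: "bounded_linear g"
    and complexification_homogeneous: "g (sc c u) = c * g u"
    and Re_complexification: "Re (g u) = f u"
proof -
  have "bounded_linear (\<lambda>v. f (sc \<i> v))"
    using bounded_linear_compose[OF f complex_structure_bounded_linear[OF sc]] .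
  then show g: "bounded_linear g"
    unfolding g_def
    by (intro bounded_linear_sub bounded_linear_const_mult
        bounded_linear_compose[OF bounded_linear_of_real] f)
  have g_i: "g (sc \<i> v) = \<i> * g v" for v
    unfolding g_def
    using complex_structure_i_i[OF sc] linear_neg[OF bounded_linear.linear[OF f]]
    by (simp add: algebra_simps)
  have "g (sc c u) = g (Re c *\<^sub>R u + Im c *\<^sub>R sc \<i> u)"
    by (subst complex_structure_Re_Im[OF sc]) (rule refl)
  also have "\<dots> = Re c *\<^sub>R g u + Im c *\<^sub>R g (sc \<i> u)"
    by (simp add: linear_add linear_scale bounded_linear.linear[OF g])
  also have "\<dots> = c * g u"
    by (simp add: g_i complex_eq_iff)
  finally show "g (sc c u) = c * g u" .
  show "Re (g u) = f u"
    unfolding g_def by simp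
qed

lemma complex_functional_separating:
  fixes y1 y2 :: "'b::real_normed_vector"
  assumes sc: "complex_structure sc" and "y1 \<noteq> y2"
  obtains g :: "'b \<Rightarrow> complex"
  where "bounded_linear g" and "\<And>c u. g (sc c u) = c * g u" and "g y1 \<noteq> g y2"
proof -
  obtain f :: "'b \<Rightarrow> real" where f: "bounded_linear f" "f y1 \<noteq> f y2"
    using bounded_linear_functional_separating[OF \<open>y1 \<noteq> y2\<close>] by blast
  let ?g = "\<lambda>v. complex_of_real (f v) - \<i> * complex_of_real (f (sc \<i> v))"
  have "Re (?g y1) \<noteq> Re (?g y2)" using f(2) by simp
  then have "?g y1 \<noteq> ?g y2" by metis
  with complexification_bounded_linear[OF sc f(1)] complexification_homogeneous[OF sc f(1)]
  show ?thesis by (rule that)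
qed

lemma hom_poly_power_functional:
  fixes f :: "'b::real_normed_vector \<Rightarrow> 'k::real_normed_field"
  assumes f: "bounded_linear f" and homogeneous: "\<And>c u. f (sc c u) = c * f u"
  shows "hom_poly sc (*) k (\<lambda>v. f v ^ k)"
  unfolding hom_poly_def
proof (intro exI conjI allI)
  define A where "A x = (\<Prod>i<k. f (x i))" for x :: "nat \<Rightarrow> 'b"
  show "f v ^ k = A (\<lambda>_. v)" for v
    by (simp add: A_def)
  have "continuous_on UNIV (\<lambda>x :: nat \<Rightarrow> 'b. f (x i))" for i
    using continuous_on_compose[OF continuous_on_product_coordinates[of i] linear_continuous_on[OF f]]
    by (simp add: o_def)
  then show "continuous_on UNIV A"
    unfolding A_def by (intro continuous_on_prod)
  have update: "A (x(i := w)) = f w * (\<Prod>j\<in>{..<k} - {i}. f (x j))" if "i < k" for x i w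
  proof -
    have "A (x(i := w)) = f w * (\<Prod>j\<in>{..<k} - {i}. f ((x(i := w)) j))"
      unfolding A_def using that by (subst prod.remove[of _ i]) auto
    also have "(\<Prod>j\<in>{..<k} - {i}. f ((x(i := w)) j)) = (\<Prod>j\<in>{..<k} - {i}. f (x j))"
      by (rule prod.cong) auto
    finally show ?thesis .
  qed
  show "multilinear_map sc (*) k A"
    unfolding multilinear_map_def
  proof (intro conjI allI impI)
    show "A x = A x'" if "\<forall>i<k. x i = x' i" for x x'
      using that unfolding A_def by (intro prod.cong) auto
    show "A (x(i := v + w)) = A (x(i := v)) + A (x(i := w))" if "i < k" for i x v w
      using update[OF that] by (simp add: linear_add bounded_linear.linear[OF f] algebra_simps)
    show "A (x(i := sc c v)) = c * A (x(i := v))" if "i < k" for i x c v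
      using update[OF that] by (simp add: homogeneous algebra_simps)
  qed
qed

lemma inj_on_Delta_if_powers_separate:
  assumes "\<And>y1 y2. y1 \<noteq> y2 \<Longrightarrow> \<exists>q\<in>Q. q y1 ^ n \<noteq> q y2 ^ n"
  shows "inj_on (Delta Q n) S"
proof (rule inj_onI, rule ext, rule ccontr)
  fix P1 P2 x
  assume Delta_eq: "Delta Q n P1 = Delta Q n P2" and "P1 x \<noteq> P2 x"
  then obtain q where "q \<in> Q" "q (P1 x) ^ n \<noteq> q (P2 x) ^ n" using assms by blast
  moreover have "Delta Q n P1 q x = Delta Q n P2 q x" using Delta_eq by simp
  ultimately show False unfolding Delta_def by simp
qed

lemma inj_on_Delta_real:
  assumes "odd (k * n)"
  shows "inj_on (Delta {q :: 'b::real_normed_vector \<Rightarrow> real. hom_poly scaleR (*) k q} n) S"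
proof (rule inj_on_Delta_if_powers_separate)
  fix y1 y2 :: 'b assume "y1 \<noteq> y2"
  then obtain f :: "'b \<Rightarrow> real" where f: "bounded_linear f" "f y1 \<noteq> f y2"
    by (rule bounded_linear_functional_separating)
  have "hom_poly scaleR (*) k (\<lambda>v. f v ^ k)"
    using f(1) by (rule hom_poly_power_functional) (simp add: linear_scale bounded_linear.linear[OF f(1)])
  moreover have "(f y1 ^ k) ^ n \<noteq> (f y2 ^ k) ^ n"
  proof
    assume "(f y1 ^ k) ^ n = (f y2 ^ k) ^ n"
    then have "root (k * n) (f y1 ^ (k * n)) = root (k * n) (f y2 ^ (k * n))"
      by (simp add: power_mult)
    then show False using f(2) by (simp add: odd_real_root_power_cancel[OF assms])
  qed
  ultimately show "\<exists>q\<in>{q. hom_poly scaleR (*) k q}. q y1 ^ n \<noteq> q y2 ^ n"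
    by (intro bexI[of _ "\<lambda>v. f v ^ k"]) simp_all
qed

lemma inj_on_Delta_complex_linear:
  assumes "complex_structure sc"
  shows "inj_on (Delta {q :: 'b::real_normed_vector \<Rightarrow> complex. hom_poly sc (*) 1 q} 1) S"
proof (rule inj_on_Delta_if_powers_separate)
  fix y1 y2 :: 'b assume "y1 \<noteq> y2"
  then obtain g where g: "bounded_linear g" "\<And>c u. g (sc c u) = c * g u" "g y1 \<noteq> g y2"
    using complex_functional_separating[OF assms] by blast
  have "hom_poly sc (*) 1 g"
    using hom_poly_power_functional[of g sc 1] g(1,2) by simp
  with g(3) show "\<exists>q\<in>{q. hom_poly sc (*) 1 q}. q y1 ^ 1 \<noteq> q y2 ^ 1" by auto
qed

theorem mainTheorem4:
  fixes E_ty :: "'a::banach itself" and F_ty :: "'b::banach itself"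
  shows
    "(\<forall>m n k::nat. (k = 1 \<and> n = 1) \<or> odd (k * n) \<longrightarrow>
        inj_on (Delta {q :: 'b \<Rightarrow> real. hom_poly scaleR (*) k q} n)
               {P :: 'a \<Rightarrow> 'b. hom_poly scaleR scaleR m P})
   \<and>
     (\<forall>(scE :: complex \<Rightarrow> 'a \<Rightarrow> 'a) (scF :: complex \<Rightarrow> 'b \<Rightarrow> 'b) (m::nat) (n::nat) (k::nat).
        complex_structure scE \<and> complex_structure scF \<and> k = 1 \<and> n = 1 \<longrightarrow>
        inj_on (Delta {q :: 'b \<Rightarrow> complex. hom_poly scF (*) k q} n)
               {P :: 'a \<Rightarrow> 'b. hom_poly scE scF m P})"
proof (intro conjI allI impI)
  fix m n k :: nat
  assume "(k = 1 \<and> n = 1) \<or> odd (k * n)"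
  then have "odd (k * n)" by auto
  then show "inj_on (Delta {q :: 'b \<Rightarrow> real. hom_poly scaleR (*) k q} n)
      {P :: 'a \<Rightarrow> 'b. hom_poly scaleR scaleR m P}"
    by (rule inj_on_Delta_real)
next
  fix scE :: "complex \<Rightarrow> 'a \<Rightarrow> 'a" and scF :: "complex \<Rightarrow> 'b \<Rightarrow> 'b" and m n k :: nat
  assume "complex_structure scE \<and> complex_structure scF \<and> k = 1 \<and> n = 1"
  then show "inj_on (Delta {q :: 'b \<Rightarrow> complex. hom_poly scF (*) k q} n)
      {P :: 'a \<Rightarrow> 'b. hom_poly scE scF m P}"
    using inj_on_Delta_complex_linear[of scF] by simp
qed

end
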